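(* Let $F$ be an imaginary cyclic sextic field with maximal real subfield $K$. If $O_K$ has a prime ideal of norm $2$ and $\epsilon\in O_F^\times$ satisfies $\|\epsilon\|^2<81$, then $\epsilon\in\mu_F$.
   Context: $F$ is a totally imaginary number field Galois over $\mathbb{Q}$ with cyclic Galois group $\langle\tau\rangle$ of order 6; $K$ is its cyclic cubic subfield; $\mu_F$ is the group of roots of unity of $F$. With the embeddings $\tau_1=\mathrm{id},\tau_2=\tau,\tau_3=\tau^2$, $\|f\|^2=2\sum_{i=1}^3|\tau_i(f)|^2$. *)

theory Defs
  imports Complex_Main "HOL-Computational_Algebra.Polynomial"
begin

text \<open>Number fields are taken to be subfields of the complex numbers.\<close>

definition is_subfield :: "complex set \<Rightarrow> bool" where
  "is_subfield F \<longleftrightarrow> 0 \<in> F \<and> 1 \<in> F \<and>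
     (\<forall>x\<in>F. \<forall>y\<in>F. x + y \<in> F \<and> x - y \<in> F \<and> x * y \<in> F) \<and>
     (\<forall>x\<in>F. x \<noteq> 0 \<longrightarrow> inverse x \<in> F)"

definition has_degree :: "complex set \<Rightarrow> nat \<Rightarrow> bool" where
  "has_degree F n \<longleftrightarrow> (\<exists>b :: nat \<Rightarrow> complex.
      (\<forall>i<n. b i \<in> F) \<and>
      (\<forall>x\<in>F. \<exists>c :: nat \<Rightarrow> rat. x = (\<Sum>i<n. of_rat (c i) * b i)) \<and>
      (\<forall>c d :: nat \<Rightarrow> rat. (\<Sum>i<n. of_rat (c i) * b i) = (\<Sum>i<n. of_rat (d i) * b i)
          \<longrightarrow> (\<forall>i<n. c i = d i)))"

text \<open>Field embeddings F \<rightarrow> C (only values on F matter).\<close>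
definition embedding_on :: "complex set \<Rightarrow> (complex \<Rightarrow> complex) \<Rightarrow> bool" where
  "embedding_on F \<sigma> \<longleftrightarrow> \<sigma> 1 = 1 \<and>
     (\<forall>x\<in>F. \<forall>y\<in>F. \<sigma> (x + y) = \<sigma> x + \<sigma> y \<and> \<sigma> (x * y) = \<sigma> x * \<sigma> y)"

text \<open>F is a number field, Galois over Q, with cyclic Galois group of order 6
  generated by \<tau>: \<tau> maps F into F, every embedding of F is (on F) a power \<tau>^k,
  and \<tau>^k is not the identity on F for 0 < k < 6.\<close>
definition cyclic_sextic :: "complex set \<Rightarrow> (complex \<Rightarrow> complex) \<Rightarrow> bool" where
  "cyclic_sextic F \<tau> \<longleftrightarrow> is_subfield F \<and> has_degree F 6 \<and>
     embedding_on F \<tau> \<and> \<tau> ` F \<subseteq> F \<and>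
     (\<forall>\<sigma>. embedding_on F \<sigma> \<longrightarrow> (\<exists>k<6. \<forall>x\<in>F. \<sigma> x = (\<tau> ^^ k) x)) \<and>
     (\<forall>k\<in>{1..5}. \<exists>x\<in>F. (\<tau> ^^ k) x \<noteq> x)"

definition totally_imaginary :: "complex set \<Rightarrow> bool" where
  "totally_imaginary F \<longleftrightarrow> (\<forall>\<sigma>. embedding_on F \<sigma> \<longrightarrow> \<not> (\<sigma> ` F \<subseteq> \<real>))"

definition algebraic_integer :: "complex \<Rightarrow> bool" where
  "algebraic_integer x \<longleftrightarrow> (\<exists>p :: int poly. lead_coeff p = 1 \<and> poly (map_poly of_int p) x = 0)"

definition ring_of_integers :: "complex set \<Rightarrow> complex set" where
  "ring_of_integers F = {x \<in> F. algebraic_integer x}"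

definition units_of_integers :: "complex set \<Rightarrow> complex set" where
  "units_of_integers F = {x \<in> ring_of_integers F. x \<noteq> 0 \<and> inverse x \<in> ring_of_integers F}"

definition roots_of_unity :: "complex set \<Rightarrow> complex set" where
  "roots_of_unity F = {x \<in> F. \<exists>n>0. x ^ n = 1}"

definition prime_ideal_in :: "complex set \<Rightarrow> complex set \<Rightarrow> bool" where
  "prime_ideal_in R P \<longleftrightarrow> P \<subseteq> R \<and> 0 \<in> P \<and>
     (\<forall>x\<in>P. \<forall>y\<in>P. x + y \<in> P \<and> x - y \<in> P) \<and>
     (\<forall>r\<in>R. \<forall>x\<in>P. r * x \<in> P) \<and> P \<noteq> R \<and>
     (\<forall>a\<in>R. \<forall>b\<in>R. a * b \<in> P \<longrightarrow> a \<in> P \<or> b \<in> P)"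

definition ideal_norm :: "complex set \<Rightarrow> complex set \<Rightarrow> nat" where
  "ideal_norm R P = card ((\<lambda>x. (\<lambda>y. x + y) ` P) ` R)"

definition sqnorm :: "(complex \<Rightarrow> complex) \<Rightarrow> complex \<Rightarrow> real" where
  "sqnorm \<tau> f = 2 * (\<Sum>i<3. (cmod ((\<tau> ^^ i) f))\<^sup>2)"

end

theory Submission
  imports Defs "Jordan_Normal_Form.Char_Poly"
begin

text \<open>
  Put \<open>u = \<epsilon> * cnj \<epsilon>\<close>. Since complex conjugation is \<open>\<tau>\<^sup>3\<close>, \<open>u\<close> is a unit of \<open>O\<^sub>K\<close> whose
  conjugates \<open>r\<^sub>k = \<bar>\<tau>\<^sup>k \<epsilon>\<bar>\<^sup>2\<close> (\<open>k = 0, 1, 2\<close>) are positive with product \<open>1\<close> and sum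
  \<open>T = \<parallel>\<epsilon>\<parallel>\<^sup>2 / 2 \<le> 40\<close>. As \<open>\<tau>\<close> permutes them cyclically, \<open>T\<close>, the second symmetric
  function \<open>S\<close> and \<open>(r\<^sub>0 - r\<^sub>1) (r\<^sub>1 - r\<^sub>2) (r\<^sub>2 - r\<^sub>0)\<close> are integers, so the discriminant of
  \<open>X\<^sup>3 - T X\<^sup>2 + S X - 1\<close> is a square. Every unit is \<open>\<equiv> 1\<close> modulo the prime \<open>P\<close> of norm 2,
  whence \<open>T\<close> and \<open>S\<close> are odd, and a finite search leaves two cases. If the discriminant
  vanishes, \<open>u\<close> is fixed by \<open>\<tau>\<close>, hence \<open>u = 1\<close>: all conjugates of \<open>\<epsilon>\<close> lie on the unit circle
  and Kronecker's theorem applies. Otherwise \<open>(T, S) = (19, 83)\<close>; then \<open>(5 - u) / 4\<close> and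
  \<open>(5 - u) / 4 - 1\<close> are both units of \<open>O\<^sub>K\<close>, which is impossible modulo \<open>P\<close>.
\<close>

section \<open>Subfields of the complex numbers and their embeddings\<close>

context
  fixes F :: "complex set"
  assumes subfield: "is_subfield F"
begin

lemma subfield_zero: "0 \<in> F"
  and subfield_one: "1 \<in> F"
  and subfield_add: "x \<in> F \<Longrightarrow> y \<in> F \<Longrightarrow> x + y \<in> F"
  and subfield_diff: "x \<in> F \<Longrightarrow> y \<in> F \<Longrightarrow> x - y \<in> F"
  and subfield_mult: "x \<in> F \<Longrightarrow> y \<in> F \<Longrightarrow> x * y \<in> F"
  using subfield by (simp_all add: is_subfield_def)

lemma subfield_inverse: "x \<in> F \<Longrightarrow> inverse x \<in> F"
  using subfield subfield_zero by (cases "x = 0") (auto simp: is_subfield_def)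

lemma subfield_uminus: "x \<in> F \<Longrightarrow> - x \<in> F"
  using subfield_diff[OF subfield_zero, of x] by simp

lemma subfield_divide: "x \<in> F \<Longrightarrow> y \<in> F \<Longrightarrow> x / y \<in> F"
  by (simp add: divide_inverse subfield_mult subfield_inverse)

lemma subfield_power: "x \<in> F \<Longrightarrow> x ^ n \<in> F"
  by (induction n) (auto simp: subfield_one subfield_mult)

lemma subfield_sum: "(\<And>i. i \<in> A \<Longrightarrow> f i \<in> F) \<Longrightarrow> sum f A \<in> F"
  by (induction A rule: infinite_finite_induct) (auto simp: subfield_zero subfield_add)

lemma subfield_of_int: "of_int n \<in> F"
proof -
  have "of_nat m \<in> F" for m
    by (induction m) (auto simp: subfield_zero subfield_one subfield_add)
  then show ?thesis
    by (cases n rule: int_cases) (auto simp: subfield_uminus simp del: of_nat_Suc)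
qed

lemma subfield_of_rat: "of_rat q \<in> F"
  by (cases q) (simp add: Fract_of_int_quotient of_rat_divide subfield_divide subfield_of_int)

lemma subfield_inter_Reals: "is_subfield (F \<inter> \<real>)"
  unfolding is_subfield_def
  by (auto simp: subfield_zero subfield_one subfield_add subfield_diff subfield_mult
      subfield_inverse)

end

context
  fixes F :: "complex set" and \<sigma> :: "complex \<Rightarrow> complex"
  assumes subfield: "is_subfield F" and embedding: "embedding_on F \<sigma>"
begin

lemma embedding_one: "\<sigma> 1 = 1"
  and embedding_add: "x \<in> F \<Longrightarrow> y \<in> F \<Longrightarrow> \<sigma> (x + y) = \<sigma> x + \<sigma> y"
  and embedding_mult: "x \<in> F \<Longrightarrow> y \<in> F \<Longrightarrow> \<sigma> (x * y) = \<sigma> x * \<sigma> y"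
  using embedding by (simp_all add: embedding_on_def)

lemma embedding_zero: "\<sigma> 0 = 0"
  using embedding_add[OF subfield_zero[OF subfield] subfield_zero[OF subfield]] by simp

lemma embedding_uminus: "x \<in> F \<Longrightarrow> \<sigma> (- x) = - \<sigma> x"
  using embedding_add[of x "- x"] subfield_uminus[OF subfield, of x] embedding_zero
  by (simp add: eq_neg_iff_add_eq_0 add.commute)

lemma embedding_diff: "x \<in> F \<Longrightarrow> y \<in> F \<Longrightarrow> \<sigma> (x - y) = \<sigma> x - \<sigma> y"
  using embedding_add[of x "- y"] embedding_uminus[of y] subfield_uminus[OF subfield, of y] by simp

lemma embedding_power: "x \<in> F \<Longrightarrow> \<sigma> (x ^ n) = \<sigma> x ^ n"
  by (induction n) (auto simp: embedding_one embedding_mult subfield_power[OF subfield])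

lemma embedding_sum:
  "(\<And>i. i \<in> A \<Longrightarrow> f i \<in> F) \<Longrightarrow> \<sigma> (sum f A) = (\<Sum>i\<in>A. \<sigma> (f i))"
  by (induction A rule: infinite_finite_induct)
    (auto simp: embedding_zero embedding_add subfield_sum[OF subfield])

lemma embedding_nonzero: "x \<in> F \<Longrightarrow> x \<noteq> 0 \<Longrightarrow> \<sigma> x \<noteq> 0"
  using embedding_mult[of x "inverse x"] subfield_inverse[OF subfield, of x] embedding_one by auto

lemma embedding_inj: "x \<in> F \<Longrightarrow> y \<in> F \<Longrightarrow> \<sigma> x = \<sigma> y \<Longrightarrow> x = y"
  using embedding_nonzero[of "x - y"] embedding_diff[of x y] subfield_diff[OF subfield, of x y]
  by auto

lemma embedding_inverse: "x \<in> F \<Longrightarrow> \<sigma> (inverse x) = inverse (\<sigma> x)"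
  using embedding_mult[of x "inverse x"] subfield_inverse[OF subfield, of x] embedding_one
    embedding_zero
  by (cases "x = 0") (auto simp: inverse_unique)

lemma embedding_of_int: "\<sigma> (of_int n) = of_int n"
proof -
  have "\<sigma> (of_nat m) = of_nat m" for m
    by (induction m) (auto simp: embedding_zero embedding_one embedding_add
        subfield_of_int[OF subfield, of "int _", simplified] subfield_one[OF subfield])
  then show ?thesis
    by (cases n rule: int_cases)
      (auto simp: embedding_uminus subfield_of_int[OF subfield, of "int _", simplified]
        simp del: of_nat_Suc)
qed

lemma embedding_of_rat: "\<sigma> (of_rat q) = of_rat q"
  by (cases q) (simp add: Fract_of_int_quotient divide_inverse of_rat_mult of_rat_inverse
      embedding_mult embedding_inverse embedding_of_int subfield_of_int[OF subfield]
      subfield_inverse[OF subfield])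

lemma embedding_rat_lincomb:
  assumes "\<And>i. i \<in> A \<Longrightarrow> b i \<in> F"
  shows "\<sigma> (\<Sum>i\<in>A. of_rat (c i) * b i) = (\<Sum>i\<in>A. of_rat (c i) * \<sigma> (b i))"
  using assms
  by (simp add: embedding_sum embedding_mult embedding_of_rat subfield_mult[OF subfield]
      subfield_of_rat[OF subfield])

lemma embedding_poly_of_int:
  assumes "x \<in> F"
  shows "\<sigma> (poly (map_poly of_int p) x) = poly (map_poly of_int p) (\<sigma> x)"
  using assms
  by (simp add: poly_altdef coeff_map_poly degree_map_poly embedding_sum embedding_mult
      embedding_power embedding_of_int subfield_mult[OF subfield] subfield_power[OF subfield]
      subfield_of_int[OF subfield])

end

lemma embedding_on_funpow:
  assumes "embedding_on F \<sigma>" and "\<sigma> ` F \<subseteq> F"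
  shows "embedding_on F (\<sigma> ^^ k)"
proof (induction k)
  case 0
  then show ?case by (simp add: embedding_on_def)
next
  case (Suc k)
  have "(\<sigma> ^^ k) ` F \<subseteq> F"
    using assms(2) by (induction k) auto
  with Suc assms show ?case
    by (auto simp: embedding_on_def image_subset_iff)
qed

section \<open>Algebraic integers\<close>

lemma algebraic_integer_iff_algebraic_int: "algebraic_integer x \<longleftrightarrow> algebraic_int x"
  by (auto simp: algebraic_integer_def algebraic_int_altdef_ipoly)

definition int_span :: "'a :: comm_ring_1 list \<Rightarrow> 'a set" where
  "int_span G = {x. \<exists>c. x = (\<Sum>i<length G. of_int (c i) * G ! i)}"

lemma int_spanI: "x = (\<Sum>i<length G. of_int (c i) * G ! i) \<Longrightarrow> x \<in> int_span G"
  unfolding int_span_def by blast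

lemma int_span_zero: "0 \<in> int_span G"
  by (rule int_spanI[where c = "\<lambda>_. 0"]) simp

lemma mem_int_span: "g \<in> set G \<Longrightarrow> g \<in> int_span G"
proof -
  assume "g \<in> set G"
  then obtain i where i: "i < length G" "g = G ! i"
    by (auto simp: in_set_conv_nth)
  then have "g = (\<Sum>j<length G. of_int (if j = i then 1 else 0) * G ! j)"
    by (simp add: if_distrib if_distribR sum.delta cong: if_cong)
  then show ?thesis
    by (rule int_spanI)
qed

lemma int_span_add: "x \<in> int_span G \<Longrightarrow> y \<in> int_span G \<Longrightarrow> x + y \<in> int_span G"
proof -
  assume "x \<in> int_span G" "y \<in> int_span G"
  then obtain c d where "x = (\<Sum>i<length G. of_int (c i) * G ! i)"
    and "y = (\<Sum>i<length G. of_int (d i) * G ! i)"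
    by (auto simp: int_span_def)
  then have "x + y = (\<Sum>i<length G. of_int (c i + d i) * G ! i)"
    by (simp add: sum.distrib distrib_right)
  then show ?thesis
    by (rule int_spanI)
qed

lemma int_span_int_mult: "x \<in> int_span G \<Longrightarrow> of_int n * x \<in> int_span G"
proof -
  assume "x \<in> int_span G"
  then obtain c where "x = (\<Sum>i<length G. of_int (c i) * G ! i)"
    by (auto simp: int_span_def)
  then have "of_int n * x = (\<Sum>i<length G. of_int (n * c i) * G ! i)"
    by (simp add: sum_distrib_left mult.assoc)
  then show ?thesis
    by (rule int_spanI)
qed

lemma int_span_uminus: "x \<in> int_span G \<Longrightarrow> - x \<in> int_span G"
  using int_span_int_mult[of x G "-1"] by simp

lemma int_span_sum: "(\<And>i. i \<in> A \<Longrightarrow> f i \<in> int_span G) \<Longrightarrow> sum f A \<in> int_span G"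
  by (induction A rule: infinite_finite_induct) (auto intro: int_span_add int_span_zero)

lemma int_span_mult_closed:
  assumes "\<And>g. g \<in> set G \<Longrightarrow> y * g \<in> int_span G" and "x \<in> int_span G"
  shows "y * x \<in> int_span G"
proof -
  obtain c where "x = (\<Sum>i<length G. of_int (c i) * G ! i)"
    using assms(2) by (auto simp: int_span_def)
  then have "y * x = (\<Sum>i<length G. of_int (c i) * (y * G ! i))"
    by (simp add: sum_distrib_left mult_ac)
  also have "\<dots> \<in> int_span G"
    by (intro int_span_sum int_span_int_mult assms(1) nth_mem) simp
  finally show ?thesis .
qed

text \<open>\<open>x\<close> is an eigenvalue of the integer matrix of multiplication by \<open>x\<close> on \<open>G\<close>, hence a
  root of its monic characteristic polynomial.\<close>

lemma algebraic_int_if_int_span_stable: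
  fixes x :: "'a :: field_char_0"
  assumes nonzero: "\<exists>g\<in>set G. g \<noteq> 0"
    and stable: "\<And>g. g \<in> set G \<Longrightarrow> x * g \<in> int_span G"
  shows "algebraic_int x"
proof -
  define n where "n = length G"
  obtain A where A: "\<And>i. i < n \<Longrightarrow> x * G ! i = (\<Sum>j<n. of_int (A i j) * G ! j)"
    using stable[OF nth_mem] unfolding int_span_def n_def by simp metis
  define Ai :: "int mat" where "Ai = mat n n (\<lambda>(i, j). A i j)"
  define v :: "'a vec" where "v = vec n (\<lambda>i. G ! i)"
  have Ai: "Ai \<in> carrier_mat n n" and Ac: "map_mat (of_int :: int \<Rightarrow> 'a) Ai \<in> carrier_mat n n"
    by (simp_all add: Ai_def)
  have "v \<noteq> 0\<^sub>v n"
    using nonzero by (auto simp: v_def n_def in_set_conv_nth vec_eq_iff)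
  moreover have "map_mat of_int Ai *\<^sub>v v = x \<cdot>\<^sub>v v"
    by (rule eq_vecI)
      (simp_all add: Ai_def v_def A mult_mat_vec_def scalar_prod_def lessThan_atLeast0)
  ultimately have "eigenvalue (map_mat of_int Ai) x"
    using Ai unfolding eigenvalue_def eigenvector_def by (intro exI[of _ v]) (auto simp: v_def)
  then have "poly (char_poly (map_mat of_int Ai)) x = 0"
    using eigenvalue_root_char_poly[OF Ac] by simp
  then have "poly (map_poly of_int (char_poly Ai)) x = 0"
    by (simp add: of_int_hom.char_poly_hom[OF Ai])
  moreover have "lead_coeff (char_poly Ai) = 1"
    using degree_monic_char_poly[OF Ai] by simp
  ultimately show ?thesis
    unfolding algebraic_int_altdef_ipoly by blast
qed

lemma power_mult_mem_int_span:
  fixes a :: "'a :: {comm_ring_1, ring_char_0}"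
  assumes p: "lead_coeff p = 1" "poly (map_poly of_int p) a = 0"
    and low: "\<And>i. i < degree p \<Longrightarrow> a ^ i * w \<in> int_span G"
  shows "a ^ k * w \<in> int_span G"
proof (induction k rule: less_induct)
  case (less k)
  define m where "m = degree p"
  show ?case
  proof (cases "k < m")
    case True
    then show ?thesis using low m_def by simp
  next
    case False
    have "0 = (\<Sum>i\<le>m. of_int (coeff p i) * a ^ i)"
      using p(2) by (simp add: poly_altdef coeff_map_poly degree_map_poly m_def)
    also have "\<dots> = (\<Sum>i<m. of_int (coeff p i) * a ^ i) + a ^ m"
      using p(1) by (simp add: lessThan_Suc_atMost[symmetric] m_def)
    finally have am: "a ^ m = - (\<Sum>i<m. of_int (coeff p i) * a ^ i)"
      by (simp add: eq_neg_iff_add_eq_0 add.commute)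
    have "a ^ k * w = a ^ (k - m) * a ^ m * w"
      using False by (simp add: power_add[symmetric])
    also have "\<dots> = - (\<Sum>i<m. of_int (coeff p i) * (a ^ (k - m + i) * w))"
      unfolding am by (simp add: sum_distrib_left sum_distrib_right power_add mult_ac)
    also have "\<dots> \<in> int_span G"
      using False by (intro int_span_uminus int_span_sum int_span_int_mult less.IH) auto
    finally show ?thesis .
  qed
qed

text \<open>The products \<open>a ^ i * b ^ j\<close> below the degrees of monic equations of \<open>a\<close> and \<open>b\<close>
  span a \<open>\<int>\<close>-module that is stable under multiplication by \<open>a\<close> and \<open>b\<close>.\<close>

lemma algebraic_int_add_mult:
  fixes a b :: "'a :: field_char_0"
  assumes "algebraic_int a" and "algebraic_int b"
  shows "algebraic_int (a + b)" and "algebraic_int (a * b)"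
proof -
  obtain p where p: "lead_coeff p = 1" "poly (map_poly of_int p) a = 0"
    using assms(1) by (auto simp: algebraic_int_altdef_ipoly)
  obtain q where q: "lead_coeff q = 1" "poly (map_poly of_int q) b = 0"
    using assms(2) by (auto simp: algebraic_int_altdef_ipoly)
  have "degree p \<noteq> 0"
    using p degree_0_id[of p] by (cases "degree p = 0") auto
  have "degree q \<noteq> 0"
    using q degree_0_id[of q] by (cases "degree q = 0") auto
  define G where "G = concat (map (\<lambda>i. map (\<lambda>j. a ^ i * b ^ j) [0..<degree q]) [0..<degree p])"
  have mem_G: "a ^ i * b ^ j \<in> set G" if "i < degree p" "j < degree q" for i j
    using that unfolding G_def by (auto intro!: bexI[of _ i] imageI)
  have low: "a ^ i * b ^ j \<in> int_span G" if "j < degree q" for i j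
    by (rule power_mult_mem_int_span[OF p]) (use that in \<open>auto intro!: mem_int_span mem_G\<close>)
  have "b ^ j * a ^ i \<in> int_span G" for i j
    by (rule power_mult_mem_int_span[OF q]) (simp add: low mult.commute)
  then have powers: "a ^ i * b ^ j \<in> int_span G" for i j
    by (simp add: mult.commute)
  have stable: "a * g \<in> int_span G" "b * g \<in> int_span G" if g: "g \<in> set G" for g
  proof -
    obtain i j where "g = a ^ i * b ^ j"
      using g by (auto simp: G_def)
    then have "a * g = a ^ Suc i * b ^ j" and "b * g = a ^ i * b ^ Suc j"
      by (simp_all add: mult_ac)
    with powers show "a * g \<in> int_span G" and "b * g \<in> int_span G"
      by metis+
  qed
  have nonzero: "\<exists>g\<in>set G. g \<noteq> 0"
    using mem_G[of 0 0] \<open>degree p \<noteq> 0\<close> \<open>degree q \<noteq> 0\<close> by (intro bexI[of _ 1]) simp_all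
  show "algebraic_int (a + b)"
  proof (rule algebraic_int_if_int_span_stable[OF nonzero])
    fix g
    assume "g \<in> set G"
    then show "(a + b) * g \<in> int_span G"
      unfolding distrib_right by (intro int_span_add stable)
  qed
  show "algebraic_int (a * b)"
  proof (rule algebraic_int_if_int_span_stable[OF nonzero])
    fix g
    assume "g \<in> set G"
    then show "a * b * g \<in> int_span G"
      unfolding mult.assoc by (intro int_span_mult_closed[OF stable(1)] stable(2))
  qed
qed

lemmas algebraic_int_add = algebraic_int_add_mult(1)
  and algebraic_int_mult = algebraic_int_add_mult(2)

lemma algebraic_int_diff:
  fixes a b :: "'a :: field_char_0"
  shows "algebraic_int a \<Longrightarrow> algebraic_int b \<Longrightarrow> algebraic_int (a - b)"
  using algebraic_int_add[of a "- b"] by auto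

lemma algebraic_int_power: "algebraic_int (a :: 'a :: field_char_0) \<Longrightarrow> algebraic_int (a ^ n)"
  by (induction n) (auto intro: algebraic_int_mult)

lemma embedding_algebraic_int:
  assumes "is_subfield F" "embedding_on F \<sigma>" "x \<in> F" "algebraic_int x"
  shows "algebraic_int (\<sigma> x)"
  using assms embedding_poly_of_int[OF assms(1,2,3)] embedding_zero[OF assms(1,2)]
  by (metis algebraic_int_altdef_ipoly)

section \<open>Polynomials with prescribed roots\<close>

lemma coeff_linear_factor_mult:
  fixes a :: "'a :: comm_ring_1"
  shows "coeff ([:- a, 1:] * q) j = - a * coeff q j + (if j = 0 then 0 else coeff q (j - 1))"
  by (simp add: coeff_pCons')

lemma algebraic_int_coeff_prod_linear:
  fixes f :: "'b \<Rightarrow> 'a :: field_char_0"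
  assumes "\<And>k. k \<in> A \<Longrightarrow> algebraic_int (f k)"
  shows "algebraic_int (coeff (\<Prod>k\<in>A. [:- f k, 1:]) j)"
  using assms
proof (induction A arbitrary: j rule: infinite_finite_induct)
  case (insert x A)
  then show ?case
    unfolding prod.insert[OF insert(1,2)] coeff_linear_factor_mult
    by (intro algebraic_int_add algebraic_int_mult) auto
qed (auto simp: coeff_1)

lemma norm_coeff_prod_linear_le:
  fixes f :: "'b \<Rightarrow> 'a :: real_normed_field"
  assumes "finite A" and "\<And>k. k \<in> A \<Longrightarrow> norm (f k) \<le> 1"
  shows "norm (coeff (\<Prod>k\<in>A. [:- f k, 1:]) j) \<le> 2 ^ card A"
  using assms
proof (induction A arbitrary: j rule: finite_induct)
  case empty
  then show ?case by (cases j) auto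
next
  case (insert x A)
  let ?q = "\<Prod>k\<in>A. [:- f k, 1:]"
  have "norm (f x * coeff ?q j) \<le> 1 * 2 ^ card A"
    unfolding norm_mult using insert by (intro mult_mono) auto
  moreover have "norm (if j = 0 then 0 else coeff ?q (j - 1)) \<le> 2 ^ card A"
    using insert by auto
  ultimately have "norm (- f x * coeff ?q j) + norm (if j = 0 then 0 else coeff ?q (j - 1))
      \<le> 2 ^ card (insert x A)"
    using insert(1,2) by simp
  then show ?case
    unfolding prod.insert[OF insert(1,2)] coeff_linear_factor_mult
    by (rule order_trans[OF norm_triangle_ineq])
qed

lemma degree_prod_linear: "finite A \<Longrightarrow> degree (\<Prod>k\<in>A. [:- f k, 1 :: 'a :: idom:]) = card A"
  by (simp add: degree_prod_sum_eq)

lemma lead_coeff_prod_linear: "lead_coeff (\<Prod>k\<in>A. [:- f k, 1 :: 'a :: idom:]) = 1"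
  by (simp add: lead_coeff_prod)

lemma coeff_prod_linear_sum_roots:
  fixes f :: "'b \<Rightarrow> 'a :: idom"
  assumes "finite A" and "A \<noteq> {}"
  shows "coeff (\<Prod>k\<in>A. [:- f k, 1:]) (card A - 1) = - sum f A"
  using assms
proof (induction A rule: finite_ne_induct)
  case (insert x A)
  have "coeff (\<Prod>k\<in>A. [:- f k, 1:]) (card A) = 1"
    using lead_coeff_prod_linear[of f A] degree_prod_linear[OF insert(1), of f] by simp
  with insert show ?case
    unfolding prod.insert[OF insert(1,3)] coeff_linear_factor_mult
    by (simp add: card_gt_0_iff)
qed simp

lemma finite_polys_bounded_degree:
  assumes "finite B"
  shows "finite {p :: 'a :: zero poly. degree p \<le> d \<and> (\<forall>j. coeff p j \<in> B)}"
proof (rule finite_subset)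
  show "{p. degree p \<le> d \<and> (\<forall>j. coeff p j \<in> B)} \<subseteq> Poly ` {cs. set cs \<subseteq> B \<and> length cs \<le> Suc d}"
  proof
    fix p :: "'a poly"
    assume "p \<in> {p. degree p \<le> d \<and> (\<forall>j. coeff p j \<in> B)}"
    then have "set (coeffs p) \<subseteq> B" "length (coeffs p) \<le> Suc d"
      by (auto simp: coeffs_def)
    then show "p \<in> Poly ` {cs. set cs \<subseteq> B \<and> length cs \<le> Suc d}"
      by (intro image_eqI[of _ _ "coeffs p"]) simp_all
  qed
  show "finite (Poly ` {cs. set cs \<subseteq> B \<and> length cs \<le> Suc d})"
    using finite_lists_length_le[OF assms] by simp
qed

lemma root_of_unity_if_powers_finite:
  fixes x :: "'a :: field"
  assumes "x \<noteq> 0" and "finite (range (\<lambda>m :: nat. x ^ m))"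
  shows "\<exists>m>0. x ^ m = 1"
proof -
  obtain a b :: nat where "a < b" "x ^ a = x ^ b"
    using assms(2) by (metis finite_imageD infinite_UNIV_nat inj_def linorder_neqE_nat)
  moreover have "x ^ a * x ^ (b - a) = x ^ b"
    using \<open>a < b\<close> by (simp flip: power_add)
  ultimately have "x ^ (b - a) = 1"
    using assms(1) by simp
  then show ?thesis
    using \<open>a < b\<close> by (intro exI[of _ "b - a"]) simp
qed

lemma char_poly_eq_if_diagonalised:
  fixes A V :: "'a :: field mat"
  assumes "A \<in> carrier_mat n n" and "V \<in> carrier_mat n n" and "det V \<noteq> 0"
    and "V * A = mat n n (\<lambda>(i, j). if i = j then d i else 0) * V"
  shows "char_poly A = (\<Prod>i<n. [:- d i, 1:])"
proof -
  define D where "D = mat n n (\<lambda>(i, j). if i = j then d i else 0)"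
  have D: "D \<in> carrier_mat n n"
    by (simp add: D_def)
  obtain W where W: "W \<in> carrier_mat n n" "W * V = 1\<^sub>m n" "V * W = 1\<^sub>m n"
    using det_non_zero_imp_unit[OF assms(2,3)] by (auto simp: Units_def ring_mat_simps)
  have "A = W * (V * A)"
    using assms(1,2) W by (simp flip: assoc_mult_mat[of W n n V n])
  also have "\<dots> = W * D * V"
    using assms(2,4) W D by (simp add: D_def[symmetric] assoc_mult_mat[of W n n D n])
  finally have "similar_mat A D"
    using assms(1,2) W D by (intro similar_matI[of _ _ W V n]) auto
  then have "char_poly A = char_poly D"
    by (rule char_poly_similar)
  also have "\<dots> = prod_list (map (\<lambda>a. [:- a, 1:]) (diag_mat D))"
    by (rule char_poly_upper_triangular[OF D]) (simp add: upper_triangular_def D_def)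
  also have "\<dots> = (\<Prod>i<n. [:- d i, 1:])"
    by (simp add: diag_mat_def D_def prod.distinct_set_conv_list[symmetric] atLeast0LessThan)
  finally show ?thesis .
qed

section \<open>Cyclic number fields\<close>

locale cyclic_number_field =
  fixes F :: "complex set" and \<tau> :: "complex \<Rightarrow> complex" and n :: nat
  assumes subfield: "is_subfield F"
    and degree: "has_degree F n"
    and embedding_tau: "embedding_on F \<tau>"
    and tau_closed: "\<tau> ` F \<subseteq> F"
    and embedding_eq_tau_pow: "embedding_on F \<sigma> \<Longrightarrow> \<exists>k<n. \<forall>x\<in>F. \<sigma> x = (\<tau> ^^ k) x"
    and tau_pow_nontrivial: "0 < k \<Longrightarrow> k < n \<Longrightarrow> \<exists>x\<in>F. (\<tau> ^^ k) x \<noteq> x"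

lemma cyclic_sextic_imp_cyclic_number_field:
  "cyclic_sextic F \<tau> \<Longrightarrow> cyclic_number_field F \<tau> 6"
  by unfold_locales (auto simp: cyclic_sextic_def)

context cyclic_number_field
begin

lemma degree_pos: "0 < n"
proof (rule ccontr)
  assume "\<not> 0 < n"
  then have "\<forall>x\<in>F. x = 0"
    using degree by (simp add: has_degree_def)
  then show False
    using subfield_one[OF subfield] by force
qed

lemma embedding_tau_pow: "embedding_on F (\<tau> ^^ k)"
  by (rule embedding_on_funpow[OF embedding_tau tau_closed])

lemma tau_pow_mem: "x \<in> F \<Longrightarrow> (\<tau> ^^ k) x \<in> F"
  using tau_closed by (induction k) auto

lemmas tau_pow_mult = embedding_mult[OF subfield embedding_tau_pow]
  and tau_pow_inj = embedding_inj[OF subfield embedding_tau_pow]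

lemma tau_pow_tau_pow: "(\<tau> ^^ k) ((\<tau> ^^ l) x) = (\<tau> ^^ (k + l)) x"
  by (simp add: funpow_add)

lemma tau_pow_cancel:
  assumes "l \<le> k" and "x \<in> F" and "(\<tau> ^^ k) x = (\<tau> ^^ l) x"
  shows "(\<tau> ^^ (k - l)) x = x"
  using assms tau_pow_inj[of "(\<tau> ^^ (k - l)) x" x l] tau_pow_mem
  by (simp add: tau_pow_tau_pow)

lemma tau_pow_period: "x \<in> F \<Longrightarrow> (\<tau> ^^ n) x = x"
proof -
  obtain j where j: "j < n" "\<forall>x\<in>F. (\<tau> ^^ n) x = (\<tau> ^^ j) x"
    using embedding_eq_tau_pow[OF embedding_tau_pow] by blast
  have "j = 0"
  proof (rule ccontr)
    assume "j \<noteq> 0"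
    with j tau_pow_nontrivial[of "n - j"] obtain x where "x \<in> F" "(\<tau> ^^ (n - j)) x \<noteq> x"
      by auto
    with j show False
      using tau_pow_cancel[of j n x] by simp
  qed
  with j show "x \<in> F \<Longrightarrow> (\<tau> ^^ n) x = x"
    by simp
qed

lemma tau_pow_mod: "x \<in> F \<Longrightarrow> (\<tau> ^^ k) x = (\<tau> ^^ (k mod n)) x"
proof (induction k rule: less_induct)
  case (less k)
  show ?case
  proof (cases "k < n")
    case False
    then have "(\<tau> ^^ k) x = (\<tau> ^^ (k - n)) ((\<tau> ^^ n) x)"
      by (simp add: tau_pow_tau_pow)
    also have "\<dots> = (\<tau> ^^ ((k - n) mod n)) x"
      using less degree_pos False by (simp add: tau_pow_period)
    finally show ?thesis
      using False by (simp add: mod_if)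
  qed simp
qed

lemma tau_pow_eq_id_iff: "(\<forall>x\<in>F. (\<tau> ^^ k) x = x) \<longleftrightarrow> n dvd k"
proof
  assume "\<forall>x\<in>F. (\<tau> ^^ k) x = x"
  then have "\<forall>x\<in>F. (\<tau> ^^ (k mod n)) x = x"
    by (simp flip: tau_pow_mod)
  then show "n dvd k"
    using tau_pow_nontrivial[of "k mod n"] degree_pos by (auto simp: mod_eq_0_iff_dvd)
qed (auto simp: tau_pow_mod)

lemma tau_pow_distinct:
  assumes "k < n" and "l < n" and "k \<noteq> l"
  shows "\<exists>x\<in>F. (\<tau> ^^ k) x \<noteq> (\<tau> ^^ l) x"
proof (rule ccontr)
  assume "\<not> ?thesis"
  then have "\<forall>x\<in>F. (\<tau> ^^ (k - l)) x = x" and "\<forall>x\<in>F. (\<tau> ^^ (l - k)) x = x"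
    using tau_pow_cancel[of l k] tau_pow_cancel[of k l] by (cases "l \<le> k"; force)+
  then have "n dvd k - l" and "n dvd l - k"
    by (simp_all add: tau_pow_eq_id_iff)
  then show False
    using assms by (cases "l < k") (auto dest: dvd_imp_le)
qed

text \<open>Subtracting \<open>(\<tau> ^^ l) y\<close> times the relation at \<open>x\<close> from the relation
  at \<open>y * x\<close> gives a shorter relation whose \<open>k\<close>-th coefficient is
  \<open>c k * ((\<tau> ^^ k) y - (\<tau> ^^ l) y)\<close>.\<close>

lemma tau_pow_linear_independent:
  assumes "S \<subseteq> {..<n}" and "\<And>x. x \<in> F \<Longrightarrow> (\<Sum>k\<in>S. c k * (\<tau> ^^ k) x) = 0" and "k \<in> S"
  shows "c k = 0"
  using assms
proof (induction "card S" arbitrary: S c rule: less_induct)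
  case less
  have "finite S"
    using less.prems(1) finite_subset by blast
  show ?case
  proof (cases "S = {k}")
    case True
    then show ?thesis
      using less.prems(2)[OF subfield_one[OF subfield]] embedding_one[OF subfield embedding_tau_pow]
      by simp
  next
    case False
    then obtain l where l: "l \<in> S" "l \<noteq> k"
      using less.prems(3) by blast
    then obtain y where y: "y \<in> F" "(\<tau> ^^ k) y \<noteq> (\<tau> ^^ l) y"
      using tau_pow_distinct less.prems(1,3) by blast
    define c' where "c' m = c m * ((\<tau> ^^ m) y - (\<tau> ^^ l) y)" for m
    have "(\<Sum>m\<in>S - {l}. c' m * (\<tau> ^^ m) x) = 0" if x: "x \<in> F" for x
    proof -
      have "(\<Sum>m\<in>S - {l}. c' m * (\<tau> ^^ m) x) = (\<Sum>m\<in>S. c' m * (\<tau> ^^ m) x)"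
        using l \<open>finite S\<close> by (simp add: c'_def sum_diff1)
      also have "\<dots> = (\<Sum>m\<in>S. c m * (\<tau> ^^ m) (y * x) - (\<tau> ^^ l) y * (c m * (\<tau> ^^ m) x))"
        by (rule sum.cong)
          (simp_all add: c'_def tau_pow_mult[OF y(1) x] tau_pow_mult[OF x y(1)] algebra_simps)
      also have "\<dots> = (\<Sum>m\<in>S. c m * (\<tau> ^^ m) (y * x)) - (\<tau> ^^ l) y * (\<Sum>m\<in>S. c m * (\<tau> ^^ m) x)"
        by (simp only: sum_subtractf sum_distrib_left)
      also have "\<dots> = 0"
        using less.prems(2) x y(1) subfield_mult[OF subfield] by simp
      finally show ?thesis .
    qed
    moreover have "card (S - {l}) < card S"
      using \<open>finite S\<close> l(1) by (rule card_Diff1_less)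
    ultimately have "c' k = 0"
      using less.prems(1,3) l(2) by (auto intro: less.hyps[of "S - {l}" c'])
    then show ?thesis
      using y by (simp add: c'_def)
  qed
qed

lemma cnj_eq_tau_pow:
  assumes "totally_imaginary F"
  obtains m where "n = 2 * m" and "\<And>x. x \<in> F \<Longrightarrow> cnj x = (\<tau> ^^ m) x"
proof -
  obtain m where m: "m < n" "\<forall>x\<in>F. cnj x = (\<tau> ^^ m) x"
    using embedding_eq_tau_pow[of cnj] by (auto simp: embedding_on_def)
  have "m \<noteq> 0"
  proof
    assume "m = 0"
    then have "id ` F \<subseteq> \<real>"
      using m by (auto simp: Reals_cnj_iff)
    moreover have "embedding_on F id"
      by (simp add: embedding_on_def)
    ultimately show False
      using assms unfolding totally_imaginary_def by blast
  qed
  have "\<forall>x\<in>F. (\<tau> ^^ (m + m)) x = x"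
    using m tau_pow_mem by (metis complex_cnj_cnj tau_pow_tau_pow)
  then have "n dvd 2 * m"
    by (simp add: tau_pow_eq_id_iff mult_2)
  then obtain q where q: "2 * m = n * q"
    by (auto elim: dvdE)
  with m(1) have "n * q < n * 2"
    by linarith
  then have "q < 2"
    by simp
  then have "q = 1"
    using q \<open>m \<noteq> 0\<close> by (cases q) auto
  then have "n = 2 * m"
    using q by simp
  with m show ?thesis
    using that by blast
qed

lemma conjugate_matrix_det_nonzero:
  assumes b: "\<And>i. i < n \<Longrightarrow> b i \<in> F"
    and span: "\<And>y. y \<in> F \<Longrightarrow> \<exists>c. y = (\<Sum>i<n. of_rat (c i) * b i)"
  shows "det (mat n n (\<lambda>(k, j). (\<tau> ^^ k) (b j))) \<noteq> 0"
proof
  assume det_zero: "det (mat n n (\<lambda>(k, j). (\<tau> ^^ k) (b j))) = 0"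
  define V where "V = mat n n (\<lambda>(k, j). (\<tau> ^^ k) (b j))"
  have "V \<in> carrier_mat n n"
    by (simp add: V_def)
  then have "det (transpose_mat V) = 0"
    using det_zero by (simp only: det_transpose V_def)
  then obtain v where v: "v \<in> carrier_vec n" "v \<noteq> 0\<^sub>v n" "transpose_mat V *\<^sub>v v = 0\<^sub>v n"
    using det_0_iff_vec_prod_zero[of "transpose_mat V" n] by (auto simp: V_def)
  have basis_relation: "(\<Sum>k<n. v $ k * (\<tau> ^^ k) (b j)) = 0" if "j < n" for j
    using arg_cong[OF v(3), of "\<lambda>w. w $ j"] that v(1)
    by (simp add: V_def mult_mat_vec_def scalar_prod_def lessThan_atLeast0 mult.commute)
  have "(\<Sum>k<n. v $ k * (\<tau> ^^ k) y) = 0" if y: "y \<in> F" for y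
  proof -
    obtain c where c: "y = (\<Sum>i<n. of_rat (c i) * b i)"
      using span[OF y] by blast
    have "(\<tau> ^^ k) y = (\<Sum>i<n. of_rat (c i) * (\<tau> ^^ k) (b i))" for k
      unfolding c by (rule embedding_rat_lincomb[OF subfield embedding_tau_pow]) (simp add: b)
    then have "(\<Sum>k<n. v $ k * (\<tau> ^^ k) y) = (\<Sum>k<n. v $ k * (\<Sum>i<n. of_rat (c i) * (\<tau> ^^ k) (b i)))"
      by simp
    also have "\<dots> = (\<Sum>k<n. \<Sum>i<n. of_rat (c i) * (v $ k * (\<tau> ^^ k) (b i)))"
      by (simp add: sum_distrib_left mult_ac)
    also have "\<dots> = (\<Sum>i<n. of_rat (c i) * (\<Sum>k<n. v $ k * (\<tau> ^^ k) (b i)))"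
      by (subst sum.swap) (simp add: sum_distrib_left)
    also have "\<dots> = 0"
      by (simp add: basis_relation)
    finally show ?thesis .
  qed
  then have "v $ k = 0" if "k < n" for k
    using that by (intro tau_pow_linear_independent[of "{..<n}" "\<lambda>k. v $ k"]) auto
  then have "v = 0\<^sub>v n"
    using v(1) by (intro eq_vecI) auto
  with v(2) show False
    by contradiction
qed

definition field_poly :: "complex \<Rightarrow> complex poly" where
  "field_poly x = (\<Prod>k<n. [:- (\<tau> ^^ k) x, 1:])"

text \<open>The field polynomial of \<open>x\<close> is the characteristic polynomial of multiplication by \<open>x\<close>
  in a \<open>\<rat>\<close>-basis \<open>b\<close> of \<open>F\<close>: the matrix of conjugates of \<open>b\<close> diagonalises it.\<close>

lemma field_poly_coeff_Rats:
  assumes x: "x \<in> F"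
  shows "coeff (field_poly x) j \<in> \<rat>"
proof -
  obtain b where b: "\<And>i. i < n \<Longrightarrow> b i \<in> F"
    and span: "\<And>y. y \<in> F \<Longrightarrow> \<exists>c. y = (\<Sum>i<n. of_rat (c i) * b i)"
    using degree by (auto simp: has_degree_def)
  then obtain co where co: "\<And>y. y \<in> F \<Longrightarrow> y = (\<Sum>i<n. of_rat (co y i) * b i)"
    by metis
  define M :: "rat mat" where "M = mat n n (\<lambda>(i, j). co (x * b j) i)"
  define V where "V = mat n n (\<lambda>(k, j). (\<tau> ^^ k) (b j))"
  define D where "D = mat n n (\<lambda>(i, j). if i = j then (\<tau> ^^ i) x else 0)"
  have diagonalise: "V * map_mat of_rat M = D * V"
  proof (rule eq_matI)
    fix k j
    assume "k < dim_row (D * V)" "j < dim_col (D * V)"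
    then have k: "k < n" and j: "j < n"
      by (simp_all add: D_def V_def)
    have "(V * map_mat of_rat M) $$ (k, j) = (\<Sum>i<n. of_rat (co (x * b j) i) * (\<tau> ^^ k) (b i))"
      using k j by (simp add: V_def M_def scalar_prod_def lessThan_atLeast0 mult.commute)
    also have "\<dots> = (\<tau> ^^ k) (\<Sum>i<n. of_rat (co (x * b j) i) * b i)"
      by (rule embedding_rat_lincomb[OF subfield embedding_tau_pow, symmetric]) (simp add: b)
    also have "\<dots> = (\<tau> ^^ k) x * (\<tau> ^^ k) (b j)"
      using x b[OF j] by (simp flip: co add: subfield_mult[OF subfield] tau_pow_mult)
    also have "\<dots> = (D * V) $$ (k, j)"
      using k j by (simp add: D_def V_def scalar_prod_def lessThan_atLeast0 if_distrib if_distribR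
          sum.delta cong: if_cong)
    finally show "(V * map_mat of_rat M) $$ (k, j) = (D * V) $$ (k, j)" .
  qed (simp_all add: D_def V_def M_def)
  have invertible: "det V \<noteq> 0"
    unfolding V_def by (intro conjugate_matrix_det_nonzero b span)
  have "char_poly (map_mat of_rat M) = field_poly x"
    unfolding field_poly_def
    by (rule char_poly_eq_if_diagonalised[OF _ _ invertible diagonalise[unfolded D_def]])
      (simp_all add: M_def V_def)
  moreover have "M \<in> carrier_mat n n"
    by (simp add: M_def)
  ultimately have "field_poly x = map_poly of_rat (char_poly M)"
    using of_rat_hom.char_poly_hom by metis
  then show ?thesis
    by (simp add: coeff_map_poly)
qed

lemma degree_field_poly: "degree (field_poly x) = n"
  by (simp add: field_poly_def degree_prod_linear)

lemma lead_coeff_field_poly: "lead_coeff (field_poly x) = 1"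
  by (simp only: field_poly_def lead_coeff_prod_linear)

lemma field_poly_root: "poly (field_poly x) x = 0"
  using degree_pos by (auto simp: field_poly_def poly_prod intro!: bexI[of _ 0])

lemma field_poly_coeff_Ints:
  assumes "x \<in> F" and "algebraic_int x"
  shows "coeff (field_poly x) j \<in> \<int>"
proof (rule rational_algebraic_int_is_int)
  show "algebraic_int (coeff (field_poly x) j)"
    unfolding field_poly_def using assms
    by (intro algebraic_int_coeff_prod_linear
        embedding_algebraic_int[OF subfield embedding_tau_pow])
qed (rule field_poly_coeff_Rats[OF assms(1)])

lemma tau_fixed_imp_Rats:
  assumes "x \<in> F" and "\<tau> x = x"
  shows "x \<in> \<rat>"
proof -
  have "(\<tau> ^^ k) x = x" for k
    using assms(2) by (induction k) simp_all
  then have "coeff (field_poly x) (n - 1) = - (of_nat n * x)"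
    using coeff_prod_linear_sum_roots[of "{..<n}" "\<lambda>k. (\<tau> ^^ k) x"] degree_pos
    by (simp add: field_poly_def lessThan_empty_iff)
  then have "of_nat n * x \<in> \<rat>"
    using field_poly_coeff_Rats[OF assms(1)] by (metis Rats_minus_iff)
  then have "of_nat n * x / of_nat n \<in> \<rat>"
    by (intro Rats_divide) simp_all
  then show ?thesis
    using degree_pos by simp
qed

lemma tau_fixed_algebraic_int_imp_Ints:
  "x \<in> F \<Longrightarrow> algebraic_int x \<Longrightarrow> \<tau> x = x \<Longrightarrow> x \<in> \<int>"
  by (intro rational_algebraic_int_is_int tau_fixed_imp_Rats)

text \<open>Kronecker's theorem. All powers of \<open>x\<close> are roots of the finitely many monic integer
  polynomials of degree \<open>n\<close> whose coefficients are bounded by \<open>2 ^ n\<close>.\<close>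

lemma root_of_unity_if_conjugates_unimodular:
  assumes x: "x \<in> F" "algebraic_int x"
    and unimodular: "\<And>k. k < n \<Longrightarrow> cmod ((\<tau> ^^ k) x) = 1"
  shows "x \<in> roots_of_unity F"
proof -
  define PS where
    "PS = {p :: complex poly. degree p \<le> n \<and> (\<forall>j. coeff p j \<in> of_int ` {-(2 ^ n)..2 ^ n})}"
  have "finite PS"
    unfolding PS_def by (rule finite_polys_bounded_degree) simp
  then have finite_roots: "finite (\<Union>p\<in>PS - {0}. {z. poly p z = 0})"
    by (auto intro: poly_roots_finite)
  have powers_roots: "x ^ m \<in> (\<Union>p\<in>PS - {0}. {z. poly p z = 0})" for m
  proof -
    have y: "x ^ m \<in> F" "algebraic_int (x ^ m)"
      using x by (simp_all add: subfield_power[OF subfield] algebraic_int_power)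
    have "coeff (field_poly (x ^ m)) j \<in> of_int ` {-(2 ^ n)..2 ^ n}" for j
    proof -
      obtain c where c: "coeff (field_poly (x ^ m)) j = of_int c"
        using field_poly_coeff_Ints[OF y] by (auto elim: Ints_cases)
      have "cmod (coeff (field_poly (x ^ m)) j) \<le> 2 ^ card {..<n}"
        unfolding field_poly_def using x(1) unimodular
        by (intro norm_coeff_prod_linear_le)
          (simp_all add: embedding_power[OF subfield embedding_tau_pow] norm_power)
      then have "real_of_int \<bar>c\<bar> \<le> real_of_int (2 ^ n)"
        using c by simp
      then have "\<bar>c\<bar> \<le> 2 ^ n"
        by (simp only: of_int_le_iff)
      with c show ?thesis
        by (auto simp: abs_le_iff)
    qed
    then have "field_poly (x ^ m) \<in> PS - {0}"
      using lead_coeff_field_poly[of "x ^ m"] by (auto simp: PS_def degree_field_poly)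
    then show ?thesis
      using field_poly_root by blast
  qed
  have "finite (range (\<lambda>m :: nat. x ^ m))"
    using finite_roots by (rule finite_subset[rotated]) (use powers_roots in auto)
  moreover have "x \<noteq> 0"
    using unimodular[of 0] degree_pos by auto
  ultimately show ?thesis
    using x(1) root_of_unity_if_powers_finite by (auto simp: roots_of_unity_def)
qed

end

section \<open>A finite search for square discriminants\<close>

text \<open>The discriminant of \<open>X\<^sup>3 - T X\<^sup>2 + S X - 1\<close>.\<close>

definition cubic_discriminant :: "int \<Rightarrow> int \<Rightarrow> int" where
  "cubic_discriminant T S = T\<^sup>2 * S\<^sup>2 - 4 * S ^ 3 - 4 * T ^ 3 + 18 * T * S - 27"

text \<open>The lists are the squares modulo 128, 9, 5, 7, 23, 17 and 13.\<close>

definition square_mod_sieve :: "int \<Rightarrow> bool" where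
  "square_mod_sieve d \<longleftrightarrow>
    d mod 128 \<in> set [0, 1, 4, 9, 16, 17, 25, 33, 36, 41, 49, 57, 64, 65, 68, 73, 81, 89, 97, 100,
      105, 113, 121] \<and>
    d mod 9 \<in> set [0, 1, 4, 7] \<and> d mod 5 \<in> set [0, 1, 4] \<and> d mod 7 \<in> set [0, 1, 2, 4] \<and>
    d mod 23 \<in> set [0, 1, 2, 3, 4, 6, 8, 9, 12, 13, 16, 18] \<and>
    d mod 17 \<in> set [0, 1, 2, 4, 8, 9, 13, 15, 16] \<and> d mod 13 \<in> set [0, 1, 3, 4, 9, 10, 12]"

lemma power2_mod_mem:
  fixes m :: int
  assumes "0 < m" and "\<forall>r\<in>set [0..m - 1]. r\<^sup>2 mod m \<in> set L"
  shows "x\<^sup>2 mod m \<in> set L"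
proof -
  have "x mod m \<in> set [0..m - 1]"
    using assms(1) by simp
  with assms(2) show ?thesis
    by (metis power_mod)
qed

lemma square_mod_sieve_power2: "square_mod_sieve (x\<^sup>2)"
  unfolding square_mod_sieve_def by (intro conjI; rule power2_mod_mem; code_simp)

lemma odd_square_discriminant_search:
  "\<forall>t\<in>set [0..19]. \<forall>s\<in>set [0..(2 * t + 1)\<^sup>2 div 6].
     0 < cubic_discriminant (2 * t + 1) (2 * s + 1) \<longrightarrow>
     square_mod_sieve (cubic_discriminant (2 * t + 1) (2 * s + 1)) \<longrightarrow> t = 9 \<and> s = 41"
  by code_simp

lemma odd_cubic_discriminant_nonzero_square:
  fixes T S D :: int
  assumes "odd T" "odd S" "0 < T" "T \<le> 40" "0 < S" "3 * S \<le> T\<^sup>2"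
    and "D\<^sup>2 = cubic_discriminant T S" and "D \<noteq> 0"
  shows "T = 19 \<and> S = 83"
proof -
  obtain t s where t: "T = 2 * t + 1" and s: "S = 2 * s + 1"
    using assms(1,2) by (metis oddE)
  have "t \<in> set [0..19]"
    using t assms(3,4) by simp
  moreover have "s \<in> set [0..(2 * t + 1)\<^sup>2 div 6]"
    using t s assms(5,6) by simp
  moreover have "0 < cubic_discriminant T S"
    using assms(7,8) by (metis zero_less_power2)
  moreover have "square_mod_sieve (cubic_discriminant T S)"
    using assms(7) square_mod_sieve_power2 by metis
  ultimately show ?thesis
    using odd_square_discriminant_search t s by auto
qed

lemma cubic_discriminant_identity:
  fixes a b c :: "'a :: comm_ring_1"
  shows "((a - b) * (b - c) * (c - a))\<^sup>2 =
    (a + b + c)\<^sup>2 * (a * b + b * c + c * a)\<^sup>2 - 4 * (a * b + b * c + c * a) ^ 3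
    - 4 * (a + b + c) ^ 3 * (a * b * c) + 18 * (a + b + c) * (a * b + b * c + c * a) * (a * b * c)
    - 27 * (a * b * c)\<^sup>2"
  by (simp add: power2_eq_square power3_eq_cube algebra_simps)

lemma symmetric_functions_positive:
  fixes a b c :: real
  assumes "0 < a" "0 < b" "0 < c"
  shows "0 < a + b + c" and "0 < a * b + b * c + c * a"
    and "3 * (a * b + b * c + c * a) \<le> (a + b + c)\<^sup>2"
proof -
  show "0 < a + b + c" and "0 < a * b + b * c + c * a"
    using assms by (simp_all add: add_pos_pos)
  have "0 \<le> (a - b)\<^sup>2 + (b - c)\<^sup>2 + (c - a)\<^sup>2"
    by simp
  then show "3 * (a * b + b * c + c * a) \<le> (a + b + c)\<^sup>2"
    by (simp add: power2_eq_square algebra_simps)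
qed

lemma norm_one_cubic_cases:
  fixes a b c :: real and T S D :: int
  assumes pos: "0 < a" "0 < b" "0 < c" and norm: "a * b * c = 1" and small: "a + b + c < 41"
    and T: "real_of_int T = a + b + c" and S: "real_of_int S = a * b + b * c + c * a"
    and D: "real_of_int D = (a - b) * (b - c) * (c - a)"
    and odd: "odd T" "odd S"
  shows "D = 0 \<or> T = 19 \<and> S = 83"
proof (cases "D = 0")
  case False
  have "real_of_int T < 41" and "real_of_int 0 < real_of_int T" and "real_of_int 0 < real_of_int S"
    and "real_of_int (3 * S) \<le> real_of_int (T\<^sup>2)"
    using small symmetric_functions_positive[OF pos] by (simp_all add: T S)
  then have bounds: "T \<le> 40" "0 < T" "0 < S" "3 * S \<le> T\<^sup>2"
    by (simp_all only: of_int_less_iff of_int_le_iff)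
  have "real_of_int (D\<^sup>2) = real_of_int (cubic_discriminant T S)"
    using cubic_discriminant_identity[of a b c] by (simp add: T S D norm cubic_discriminant_def)
  then have "D\<^sup>2 = cubic_discriminant T S"
    by (simp only: of_int_eq_iff)
  then show ?thesis
    using odd_cubic_discriminant_nonzero_square[OF odd bounds(2,1,3,4)] False by blast
qed simp

section \<open>Rings of integers and ideals of index two\<close>

lemma ring_of_integers_iff: "x \<in> ring_of_integers F \<longleftrightarrow> x \<in> F \<and> algebraic_int x"
  by (simp add: ring_of_integers_def algebraic_integer_iff_algebraic_int)

lemma units_of_integers_iff:
  "x \<in> units_of_integers F \<longleftrightarrow>
     x \<in> ring_of_integers F \<and> inverse x \<in> ring_of_integers F \<and> x \<noteq> 0"
  by (auto simp: units_of_integers_def)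

context
  fixes F :: "complex set"
  assumes subfield: "is_subfield F"
begin

lemma ring_of_integers_of_int: "of_int k \<in> ring_of_integers F"
  by (simp add: ring_of_integers_iff subfield_of_int[OF subfield])

lemma ring_of_integers_mult:
  "x \<in> ring_of_integers F \<Longrightarrow> y \<in> ring_of_integers F \<Longrightarrow> x * y \<in> ring_of_integers F"
  by (simp add: ring_of_integers_iff subfield_mult[OF subfield] algebraic_int_mult)

end

lemma
  assumes "prime_ideal_in R P"
  shows prime_ideal_in_subset: "P \<subseteq> R"
    and prime_ideal_in_zero: "0 \<in> P"
    and prime_ideal_in_add: "x \<in> P \<Longrightarrow> y \<in> P \<Longrightarrow> x + y \<in> P"
    and prime_ideal_in_diff: "x \<in> P \<Longrightarrow> y \<in> P \<Longrightarrow> x - y \<in> P"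
    and prime_ideal_in_mult: "r \<in> R \<Longrightarrow> x \<in> P \<Longrightarrow> r * x \<in> P"
    and prime_ideal_in_proper: "P \<noteq> R"
  using assms by (simp_all add: prime_ideal_in_def)

context
  fixes R P :: "complex set"
  assumes prime_ideal: "prime_ideal_in R P" and index_two: "ideal_norm R P = 2"
    and of_int_mem: "\<And>k. of_int k \<in> R"
begin

lemma index_two_one_notin: "1 \<notin> P"
proof
  assume "1 \<in> P"
  then have "R \<subseteq> P"
    using prime_ideal_in_mult[OF prime_ideal, of _ 1] by auto
  then show False
    using prime_ideal_in_subset[OF prime_ideal] prime_ideal_in_proper[OF prime_ideal] by blast
qed

lemma index_two_cases:
  assumes "x \<in> R"
  shows "x \<in> P \<or> x - 1 \<in> P"
proof -
  define cosets where "cosets = (\<lambda>a. (\<lambda>y. a + y) ` P) ` R"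
  define Q where "Q = (\<lambda>y. 1 + y) ` P"
  have "P \<in> cosets"
    using of_int_mem[of 0] unfolding cosets_def by (intro image_eqI[of _ _ 0]) auto
  moreover have "Q \<in> cosets"
    using of_int_mem[of 1] unfolding cosets_def Q_def by auto
  moreover have "P \<noteq> Q"
  proof
    assume "P = Q"
    then have "0 \<in> Q"
      using prime_ideal_in_zero[OF prime_ideal] by simp
    then obtain p where "p \<in> P" "0 = 1 + p"
      unfolding Q_def by blast
    moreover have "- p = 1"
      using \<open>0 = 1 + p\<close> by (metis add.commute add_eq_0_iff)
    ultimately have "1 \<in> P"
      using prime_ideal_in_diff[OF prime_ideal prime_ideal_in_zero[OF prime_ideal], of p] by simp
    then show False
      using index_two_one_notin by blast
  qed
  moreover have "card cosets = 2"
    using index_two by (simp add: ideal_norm_def cosets_def)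
  moreover have "finite cosets"
    using \<open>card cosets = 2\<close> by (intro card_ge_0_finite) simp
  ultimately have cosets: "cosets = {P, Q}"
    using card_subset_eq[of cosets "{P, Q}"] by simp
  have "(\<lambda>y. x + y) ` P \<in> cosets"
    using assms unfolding cosets_def by blast
  moreover have "x \<in> (\<lambda>y. x + y) ` P"
    using prime_ideal_in_zero[OF prime_ideal] by (intro image_eqI[of _ _ 0]) auto
  ultimately have "x \<in> P \<or> x \<in> Q"
    unfolding cosets by auto
  then show ?thesis
    unfolding Q_def by auto
qed

lemma index_two_of_int_mem_iff: "of_int m \<in> P \<longleftrightarrow> even m"
proof -
  have two: "2 \<in> P"
    using index_two_cases[OF of_int_mem[of 2]] index_two_one_notin by auto
  have double: "of_int k * 2 \<in> P" for k
    by (rule prime_ideal_in_mult[OF prime_ideal of_int_mem two])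
  show ?thesis
  proof
    assume "of_int m \<in> P"
    show "even m"
    proof (rule ccontr)
      assume "odd m"
      then obtain k where "m = 2 * k + 1"
        by (rule oddE)
      then have "of_int m - of_int k * 2 = (1 :: complex)"
        by simp
      then show False
        using prime_ideal_in_diff[OF prime_ideal \<open>of_int m \<in> P\<close> double[of k]] index_two_one_notin
        by simp
    qed
  next
    assume "even m"
    then show "of_int m \<in> P"
      using double by (auto elim!: evenE simp: mult.commute)
  qed
qed

lemma index_two_unit_notin:
  assumes "inverse x \<in> R" and "x \<noteq> 0"
  shows "x \<notin> P"
proof
  assume "x \<in> P"
  then have "inverse x * x \<in> P"
    by (rule prime_ideal_in_mult[OF prime_ideal assms(1)])
  then show False
    using assms(2) index_two_one_notin by simp
qed

lemma index_two_unit: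
  assumes "x \<in> R" and "inverse x \<in> R" and "x \<noteq> 0"
  shows "x - 1 \<in> P"
  using index_two_cases[OF assms(1)] index_two_unit_notin[OF assms(2,3)] by blast

lemma index_two_sum_units_odd:
  assumes "\<And>x. x \<in> {a, b, c} \<Longrightarrow> x \<in> R \<and> inverse x \<in> R \<and> x \<noteq> 0"
    and "a + b + c = of_int m"
  shows "odd m"
proof -
  have "(a - 1) + (b - 1) + (c - 1) \<in> P"
    using assms(1) by (intro prime_ideal_in_add[OF prime_ideal] index_two_unit) auto
  then have "of_int (m - 3) \<in> P"
    using assms(2) by (simp add: algebra_simps)
  then show ?thesis
    unfolding index_two_of_int_mem_iff by simp
qed

lemma index_two_no_exceptional_unit:
  assumes "x \<in> R" and "inverse x \<in> R" and "x \<noteq> 0"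
    and "inverse (x - 1) \<in> R" and "x \<noteq> 1"
  shows False
  using index_two_unit[OF assms(1-3)] index_two_unit_notin[OF assms(4)] assms(5) by simp

end

text \<open>\<open>\<theta> = (5 - v) / 4\<close> is a root of \<open>X\<^sup>3 + X\<^sup>2 - 2 X - 1\<close>, so \<open>\<theta>\<close> and \<open>\<theta> - 1\<close> are
  both units.\<close>

lemma index_two_no_root_cubic_19_83:
  assumes subfield: "is_subfield L"
    and P: "prime_ideal_in (ring_of_integers L) P" "ideal_norm (ring_of_integers L) P = 2"
    and v: "v \<in> L"
  shows "v ^ 3 - 19 * v\<^sup>2 + 83 * v - 1 \<noteq> 0"
proof
  assume root: "v ^ 3 - 19 * v\<^sup>2 + 83 * v - 1 = 0"
  define \<theta> where "\<theta> = (5 - v) / 4"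
  have cubic: "\<theta> ^ 3 + \<theta>\<^sup>2 - 2 * \<theta> - 1 = 0"
  proof -
    have "\<theta> ^ 3 + \<theta>\<^sup>2 - 2 * \<theta> - 1 = - (v ^ 3 - 19 * v\<^sup>2 + 83 * v - 1) / 64"
      unfolding \<theta>_def by (simp add: field_simps power2_eq_square power3_eq_cube)
    with root show ?thesis
      by simp
  qed
  have "\<theta> \<in> L"
    unfolding \<theta>_def using v
    by (intro subfield_divide[OF subfield] subfield_diff[OF subfield]
        subfield_of_int[OF subfield, of 5, simplified]
        subfield_of_int[OF subfield, of 4, simplified])
  moreover have "algebraic_int \<theta>"
    unfolding algebraic_int_altdef_ipoly using cubic
    by (intro exI[of _ "[:-1, -2, 1, 1:]"])
      (simp add: algebra_simps power2_eq_square power3_eq_cube)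
  ultimately have \<theta>: "\<theta> \<in> ring_of_integers L"
    by (simp add: ring_of_integers_iff)
  have "\<theta> * (\<theta>\<^sup>2 + \<theta> - 2) = 1" and "(\<theta> - 1) * (\<theta>\<^sup>2 + 2 * \<theta>) = 1"
    using cubic by (simp_all add: algebra_simps power2_eq_square power3_eq_cube)
  then have "inverse \<theta> = \<theta>\<^sup>2 + \<theta> - 2" and "inverse (\<theta> - 1) = \<theta>\<^sup>2 + 2 * \<theta>"
    by (simp_all add: inverse_unique mult.commute)
  moreover have "\<theta>\<^sup>2 + \<theta> - 2 \<in> ring_of_integers L" and "\<theta>\<^sup>2 + 2 * \<theta> \<in> ring_of_integers L"
    using \<theta> subfield
    by (simp_all add: ring_of_integers_iff subfield_add subfield_diff subfield_mult power2_eq_square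
        subfield_of_int[OF subfield, of 2, simplified] algebraic_int_add algebraic_int_diff
        algebraic_int_mult)
  ultimately have "inverse \<theta> \<in> ring_of_integers L" and "inverse (\<theta> - 1) \<in> ring_of_integers L"
    by simp_all
  moreover have "\<theta> \<noteq> 0" and "\<theta> \<noteq> 1"
    using cubic by auto
  ultimately show False
    using index_two_no_exceptional_unit[OF P ring_of_integers_of_int[OF subfield] \<theta>] by blast
qed

section \<open>Orbits of real units of length three\<close>

lemma of_int_eq_1_if_inverse_algebraic_int:
  assumes "algebraic_int (inverse (of_int n :: 'a :: field_char_0))" and "0 < n"
  shows "n = 1"
proof -
  obtain m where "inverse (of_int n :: 'a) = of_int m"
    using rational_algebraic_int_is_int[OF assms(1)] by (auto elim: Ints_cases)
  then have "of_int (n * m) = (1 :: 'a)"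
    using assms(2) by (simp add: field_simps)
  then have "n * m = 1"
    using of_int_eq_1_iff by blast
  then show ?thesis
    using assms(2) pos_zmult_eq_1_iff by blast
qed

context cyclic_number_field
begin

lemma tau_pow_units: "x \<in> units_of_integers F \<Longrightarrow> (\<tau> ^^ k) x \<in> units_of_integers F"
  by (auto simp: units_of_integers_iff ring_of_integers_iff tau_pow_mem
      embedding_algebraic_int[OF subfield embedding_tau_pow] subfield_inverse[OF subfield]
      embedding_nonzero[OF subfield embedding_tau_pow]
      embedding_inverse[OF subfield embedding_tau_pow, symmetric])

lemma tau_fixed_positive_unit_eq_1:
  assumes "x \<in> F" "algebraic_int x" "algebraic_int (inverse x)" "\<tau> x = x"
    and "x = of_real r" "0 < r"
  shows "x = 1"
proof -
  obtain m where m: "x = of_int m"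
    using tau_fixed_algebraic_int_imp_Ints[OF assms(1,2,4)] by (auto elim: Ints_cases)
  have "complex_of_real (real_of_int m) = complex_of_real r"
    using assms(5) m by simp
  then have "0 < m"
    using assms(6) by (simp only: of_real_eq_iff)
  then have "m = 1"
    using assms(3) m by (intro of_int_eq_1_if_inverse_algebraic_int[where 'a = complex]) simp_all
  then show ?thesis
    using m by simp
qed

lemma cubic_orbit_symmetric_Ints:
  assumes x: "x \<in> F" "algebraic_int x" and period: "\<tau> (\<tau> (\<tau> x)) = x"
  shows "x + \<tau> x + \<tau> (\<tau> x) \<in> \<int>"
    and "x * \<tau> x + \<tau> x * \<tau> (\<tau> x) + \<tau> (\<tau> x) * x \<in> \<int>"
    and "x * \<tau> x * \<tau> (\<tau> x) \<in> \<int>"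
    and "(x - \<tau> x) * (\<tau> x - \<tau> (\<tau> x)) * (\<tau> (\<tau> x) - x) \<in> \<int>"
proof -
  have F: "\<tau> x \<in> F" "\<tau> (\<tau> x) \<in> F"
    using x tau_closed by auto
  have int: "algebraic_int (\<tau> x)" "algebraic_int (\<tau> (\<tau> x))"
    using x F embedding_algebraic_int[OF subfield embedding_tau] by auto
  note closed = subfield_add[OF subfield] subfield_diff[OF subfield] subfield_mult[OF subfield]
    algebraic_int_add algebraic_int_diff algebraic_int_mult
  note tau = embedding_add[OF subfield embedding_tau] embedding_diff[OF subfield embedding_tau]
    embedding_mult[OF subfield embedding_tau]
  show "x + \<tau> x + \<tau> (\<tau> x) \<in> \<int>"
    by (rule tau_fixed_algebraic_int_imp_Ints) (simp_all add: x F int closed tau period add_ac)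
  show "x * \<tau> x + \<tau> x * \<tau> (\<tau> x) + \<tau> (\<tau> x) * x \<in> \<int>"
    by (rule tau_fixed_algebraic_int_imp_Ints)
      (simp_all add: x F int closed tau period add_ac mult_ac)
  show "x * \<tau> x * \<tau> (\<tau> x) \<in> \<int>"
    by (rule tau_fixed_algebraic_int_imp_Ints) (simp_all add: x F int closed tau period mult_ac)
  show "(x - \<tau> x) * (\<tau> x - \<tau> (\<tau> x)) * (\<tau> (\<tau> x) - x) \<in> \<int>"
    by (rule tau_fixed_algebraic_int_imp_Ints) (simp_all add: x F int closed tau period mult_ac)
qed

lemma cubic_orbit_collapse:
  assumes x: "x \<in> F" and period: "\<tau> (\<tau> (\<tau> x)) = x"
    and "(x - \<tau> x) * (\<tau> x - \<tau> (\<tau> x)) * (\<tau> (\<tau> x) - x) = 0"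
  shows "\<tau> x = x"
proof -
  have F: "\<tau> x \<in> F" "\<tau> (\<tau> x) \<in> F"
    using x tau_closed by auto
  note inj = embedding_inj[OF subfield embedding_tau]
  consider "x = \<tau> x" | "\<tau> x = \<tau> (\<tau> x)" | "\<tau> (\<tau> x) = x"
    using assms(3) by auto
  then show ?thesis
  proof cases
    case 2
    then show ?thesis
      using inj[OF x F(1)] by simp
  next
    case 3
    then show ?thesis
      using period by simp
  qed simp
qed

lemma totally_positive_unit_orbit_norm:
  assumes x: "x \<in> F" "\<tau> (\<tau> (\<tau> x)) = x"
    and units: "\<And>k. (\<tau> ^^ k) x \<in> units_of_integers (F \<inter> \<real>)"
    and real: "\<And>k. (\<tau> ^^ k) x = of_real (r k)" and positive: "\<And>k. 0 < r k"
  shows "x * \<tau> x * \<tau> (\<tau> x) = 1"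
proof -
  have unit: "algebraic_int ((\<tau> ^^ k) x)" "algebraic_int (inverse ((\<tau> ^^ k) x))" for k
    using units[of k] by (simp_all add: units_of_integers_iff ring_of_integers_iff)
  obtain N where N: "x * \<tau> x * \<tau> (\<tau> x) = of_int N"
    using cubic_orbit_symmetric_Ints(3)[OF x(1) unit(1)[of 0, simplified] x(2)] by (auto elim: Ints_cases)
  have "N = 1"
  proof (rule of_int_eq_1_if_inverse_algebraic_int[where 'a = complex])
    show "algebraic_int (inverse (of_int N :: complex))"
      using unit(2)[of 0] unit(2)[of 1] unit(2)[of 2]
      by (simp add: N[symmetric] numeral_2_eq_2 algebraic_int_mult)
    have "real_of_int N = r 0 * r 1 * r 2"
      using arg_cong[OF N, of Re] real[of 0] real[of 1] real[of 2] by (simp add: numeral_2_eq_2)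
    then show "0 < N"
      using positive by (metis mult_pos_pos of_int_0_less_iff)
  qed
  with N show ?thesis
    by simp
qed

lemma totally_positive_unit_orbit_fixed:
  assumes P: "prime_ideal_in (ring_of_integers (F \<inter> \<real>)) P"
      "ideal_norm (ring_of_integers (F \<inter> \<real>)) P = 2"
    and x: "x \<in> F" "(\<tau> ^^ 3) x = x"
    and units: "\<And>k. (\<tau> ^^ k) x \<in> units_of_integers (F \<inter> \<real>)"
    and real: "\<And>k. (\<tau> ^^ k) x = of_real (r k)" and positive: "\<And>k. 0 < r k"
    and small: "r 0 + r 1 + r 2 < 41"
  shows "\<tau> x = x"
proof -
  define y z where "y = \<tau> x" and "z = \<tau> y"
  let ?R = "ring_of_integers (F \<inter> \<real>)"
  have subfield_R: "is_subfield (F \<inter> \<real>)"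
    by (rule subfield_inter_Reals[OF subfield])
  have orbit: "x = of_real (r 0)" "y = of_real (r 1)" "z = of_real (r 2)" and period: "\<tau> z = x"
    using real[of 0] real[of 1] real[of 2] x(2)
    by (simp_all add: y_def z_def numeral_3_eq_3 numeral_2_eq_2)
  have norm: "x * y * z = 1"
    using totally_positive_unit_orbit_norm[OF x(1) _ units real positive] period
    by (simp add: y_def z_def)
  have unit: "w \<in> ?R \<and> inverse w \<in> ?R \<and> w \<noteq> 0" if "w \<in> {x, y, z}" for w
    using that units[of 0] units[of 1] units[of 2]
    by (auto simp: y_def z_def numeral_2_eq_2 units_of_integers_iff)
  obtain T S D :: int where T: "x + y + z = of_int T" and S: "x * y + y * z + z * x = of_int S"
    and D: "(x - y) * (y - z) * (z - x) = of_int D"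
    using cubic_orbit_symmetric_Ints[OF x(1)] unit period
    by (auto simp: y_def z_def ring_of_integers_iff elim!: Ints_cases)
  have "real_of_int T = r 0 + r 1 + r 2" and "real_of_int S = r 0 * r 1 + r 1 * r 2 + r 2 * r 0"
    and "r 0 * r 1 * r 2 = 1" and "real_of_int D = (r 0 - r 1) * (r 1 - r 2) * (r 2 - r 0)"
    using arg_cong[OF T, of Re] arg_cong[OF S, of Re] arg_cong[OF norm, of Re]
      arg_cong[OF D, of Re]
    by (simp_all add: orbit)
  moreover have "odd T"
    by (rule index_two_sum_units_odd[OF P ring_of_integers_of_int[OF subfield_R] _ T])
      (use unit in blast)
  moreover have "odd S"
    by (rule index_two_sum_units_odd[OF P ring_of_integers_of_int[OF subfield_R] _ S])
      (use unit in \<open>auto simp: ring_of_integers_mult[OF subfield_R]\<close>)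
  ultimately consider "D = 0" | "T = 19" "S = 83"
    using norm_one_cubic_cases[OF positive positive positive _ small] by fastforce
  then show ?thesis
  proof cases
    case 1
    then show ?thesis
      using cubic_orbit_collapse[OF x(1)] period D by (simp add: y_def z_def)
  next
    case 2
    have "x ^ 3 - (x + y + z) * x\<^sup>2 + (x * y + y * z + z * x) * x - x * y * z = 0"
      by (simp add: power2_eq_square power3_eq_cube algebra_simps)
    then have "x ^ 3 - 19 * x\<^sup>2 + 83 * x - 1 = 0"
      using T S norm 2 by simp
    then show ?thesis
      using index_two_no_root_cubic_19_83[OF subfield_R P, of x] unit
      by (simp add: ring_of_integers_iff)
  qed
qed

end

section \<open>Imaginary cyclic sextic fields\<close>

locale imaginary_cyclic_sextic = cyclic_number_field F \<tau> 6 for F \<tau> +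
  assumes totally_imaginary: "totally_imaginary F"
begin

lemma cnj_eq_tau3: "x \<in> F \<Longrightarrow> cnj x = (\<tau> ^^ 3) x"
proof -
  obtain m where "(6 :: nat) = 2 * m" and "\<And>y. y \<in> F \<Longrightarrow> cnj y = (\<tau> ^^ m) y"
    using cnj_eq_tau_pow[OF totally_imaginary] by blast
  moreover have "m = 3"
    using \<open>6 = 2 * m\<close> by simp
  ultimately show "x \<in> F \<Longrightarrow> cnj x = (\<tau> ^^ 3) x"
    by simp
qed

lemma tau_pow_norm_square:
  assumes "x \<in> F"
  shows "(\<tau> ^^ k) (x * cnj x) = of_real ((cmod ((\<tau> ^^ k) x))\<^sup>2)"
proof -
  have "(\<tau> ^^ k) (x * cnj x) = (\<tau> ^^ k) x * (\<tau> ^^ k) ((\<tau> ^^ 3) x)"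
    using assms by (simp add: cnj_eq_tau3 tau_pow_mult tau_pow_mem)
  also have "(\<tau> ^^ k) ((\<tau> ^^ 3) x) = cnj ((\<tau> ^^ k) x)"
    using assms by (simp add: cnj_eq_tau3 tau_pow_mem tau_pow_tau_pow add.commute)
  finally show ?thesis
    unfolding complex_norm_square .
qed

lemma norm_square_units:
  assumes "x \<in> units_of_integers F"
  shows "x * cnj x \<in> units_of_integers (F \<inter> \<real>)"
proof -
  have x: "x \<in> F" "algebraic_int x" "inverse x \<in> F" "algebraic_int (inverse x)" "x \<noteq> 0"
    using assms by (auto simp: units_of_integers_iff ring_of_integers_iff)
  then have "cnj x \<in> F" and "cnj (inverse x) \<in> F"
    by (simp_all add: cnj_eq_tau3 tau_pow_mem subfield_inverse[OF subfield])
  moreover have "x * cnj x \<in> \<real>"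
    by (simp add: complex_norm_square[symmetric])
  moreover have "inverse (x * cnj x) \<in> \<real>"
    by (simp add: complex_norm_square[symmetric] flip: of_real_inverse)
  moreover have "algebraic_int (cnj x)" and "algebraic_int (cnj (inverse x))"
    using x by (simp_all only: algebraic_int_cnj_iff)
  ultimately show ?thesis
    using x by (simp add: units_of_integers_iff ring_of_integers_iff subfield_mult[OF subfield]
        algebraic_int_mult)
qed

lemma small_unit_is_root_of_unity:
  assumes P: "prime_ideal_in (ring_of_integers (F \<inter> \<real>)) P"
      "ideal_norm (ring_of_integers (F \<inter> \<real>)) P = 2"
    and unit: "\<epsilon> \<in> units_of_integers F"
    and small: "sqnorm \<tau> \<epsilon> < 81"
  shows "\<epsilon> \<in> roots_of_unity F"
proof -
  define u where "u = \<epsilon> * cnj \<epsilon>"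
  define r where "r k = (cmod ((\<tau> ^^ k) \<epsilon>))\<^sup>2" for k
  have \<epsilon>: "\<epsilon> \<in> F" "algebraic_int \<epsilon>" "\<epsilon> \<noteq> 0"
    using unit by (auto simp: units_of_integers_iff ring_of_integers_iff)
  have conjugates: "(\<tau> ^^ k) u = of_real (r k)" for k
    unfolding u_def r_def using \<epsilon>(1) by (rule tau_pow_norm_square)
  have "u \<in> units_of_integers (F \<inter> \<real>)"
    unfolding u_def by (rule norm_square_units[OF unit])
  then have u: "u \<in> F" "algebraic_int u" "algebraic_int (inverse u)"
    by (auto simp: units_of_integers_iff ring_of_integers_iff)
  have "(\<tau> ^^ 3) u = u"
    using conjugates[of 3] conjugates[of 0] \<epsilon>(1) by (simp add: r_def cnj_eq_tau3[symmetric])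
  moreover have "(\<tau> ^^ k) u \<in> units_of_integers (F \<inter> \<real>)" for k
    using norm_square_units[OF tau_pow_units[OF unit]]
      tau_pow_norm_square[OF tau_pow_mem[OF \<epsilon>(1)], of 0]
    by (simp add: conjugates r_def)
  moreover note conjugates
  moreover have positive: "0 < r k" for k
    using embedding_nonzero[OF subfield embedding_tau_pow \<epsilon>(1,3)] by (simp add: r_def)
  moreover have "r 0 + r 1 + r 2 < 41"
    using small by (simp add: sqnorm_def r_def numeral_3_eq_3 numeral_2_eq_2)
  ultimately have "\<tau> u = u"
    by (rule totally_positive_unit_orbit_fixed[OF P u(1)])
  have "u = 1"
    by (rule tau_fixed_positive_unit_eq_1[OF u \<open>\<tau> u = u\<close> _ positive[of 0]])
      (use conjugates[of 0] in simp)
  moreover have "(\<tau> ^^ k) u = u" for k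
    using \<open>\<tau> u = u\<close> by (induction k) simp_all
  ultimately have "complex_of_real ((cmod ((\<tau> ^^ k) \<epsilon>))\<^sup>2) = complex_of_real 1" for k
    using conjugates[of k] by (simp add: r_def)
  then have "cmod ((\<tau> ^^ k) \<epsilon>) = 1" for k
    by (simp only: of_real_eq_iff abs_square_eq_1) simp
  then show ?thesis
    using root_of_unity_if_conjugates_unimodular[OF \<epsilon>(1,2)] by blast
qed

end

theorem lemma4p1:
  fixes F :: "complex set" and \<tau> :: "complex \<Rightarrow> complex" and \<epsilon> :: complex
  assumes "cyclic_sextic F \<tau>"
    and "totally_imaginary F"
    and "\<exists>P. prime_ideal_in (ring_of_integers (F \<inter> \<real>)) P
              \<and> ideal_norm (ring_of_integers (F \<inter> \<real>)) P = 2"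
    and "\<epsilon> \<in> units_of_integers F"
    and "sqnorm \<tau> \<epsilon> < 81"
  shows "\<epsilon> \<in> roots_of_unity F"
proof -
  interpret cyclic_number_field F \<tau> 6
    by (rule cyclic_sextic_imp_cyclic_number_field[OF assms(1)])
  interpret imaginary_cyclic_sextic F \<tau>
    by unfold_locales (rule assms(2))
  obtain P where "prime_ideal_in (ring_of_integers (F \<inter> \<real>)) P"
    and "ideal_norm (ring_of_integers (F \<inter> \<real>)) P = 2"
    using assms(3) by blast
  then show ?thesis
    by (rule small_unit_is_root_of_unity[OF _ _ assms(4,5)])
qed

end
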